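(* Let $n$ be even, $k\ge1$, $q=2^k$, and $f(x)=a_0(x)+2a_1(x)+\cdots+2^{k-1}a_{k-1}(x)$ from $\mathbb{V}_n$ to $\mathbb{Z}_{2^k}$ with Boolean $a_j$. Then $f$ is $\mathbb{Z}_q$-bent if and only if for every $t=0,1,\ldots,k-1$ the function $f_t(x)=a_0(x)+2a_1(x)+\cdots+2^{k-t-1}a_{k-t-1}(x)$, regarded as a function from $\mathbb{V}_n$ to $\mathbb{Z}_{2^{k-t}}$, is gbent.
   Context: $\mathbb{V}_n$ is an $n$-dimensional $\mathbb{F}_2$-vector space with inner product $u\cdot x$. For $g:\mathbb{V}_n\to\mathbb{Z}_{2^m}$, $g$ is gbent if $|\sum_x\zeta_{2^m}^{g(x)}(-1)^{u\cdot x}|=2^{n/2}$ for all $u$, $\zeta_{2^m}=e^{2\pi i/2^m}$ (for $m=1$ this is ordinary bentness). $f:\mathbb{V}_n\to\mathbb{Z}_q$ is $\mathbb{Z}_q$-bent if $|\sum_{x\in\mathbb{V}_n}\zeta_q^{af(x)}(-1)^{u\cdot x}|=2^{n/2}$ for every $u\in\mathbb{V}_n$ and every nonzero $a\in\mathbb{Z}_q$. *)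

theory Defs
  imports "HOL-Analysis.Analysis"
begin

definition Vn :: "nat \<Rightarrow> bool list set" where
  "Vn n = {x. length x = n}"

definition dotp :: "bool list \<Rightarrow> bool list \<Rightarrow> nat" where
  "dotp u x = card {i. i < length x \<and> u ! i \<and> x ! i} mod 2"

definition zeta :: "nat \<Rightarrow> complex" where
  "zeta q = cis (2 * pi / real q)"

text \<open>Walsh-type transform of g : V_n \<rightarrow> Z_q (values taken as integers, read mod q).\<close>
definition walsh :: "nat \<Rightarrow> nat \<Rightarrow> (bool list \<Rightarrow> int) \<Rightarrow> bool list \<Rightarrow> complex" where
  "walsh q n g u = (\<Sum>x\<in>Vn n. zeta q powi g x * (-1) ^ dotp u x)"

definition gbent :: "nat \<Rightarrow> nat \<Rightarrow> (bool list \<Rightarrow> int) \<Rightarrow> bool" where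
  "gbent m n g \<longleftrightarrow> (\<forall>u\<in>Vn n. norm (walsh (2^m) n g u) = 2 powr (real n / 2))"

definition Zq_bent :: "nat \<Rightarrow> nat \<Rightarrow> (bool list \<Rightarrow> int) \<Rightarrow> bool" where
  "Zq_bent q n f \<longleftrightarrow> (\<forall>u\<in>Vn n. \<forall>a::int. 0 < a \<and> a < int q \<longrightarrow>
      norm (walsh q n (\<lambda>x. a * f x) u) = 2 powr (real n / 2))"

end

theory Submission
  imports Defs "HOL-Computational_Algebra.Polynomial"
begin

text \<open>
  Let \<zeta> be a primitive 2^m-th root of unity. For odd b, \<zeta> \<mapsto> \<zeta>^b extends to an
  automorphism of \<rat>(\<zeta>) commuting with complex conjugation, so it fixes |W|^2 for
  W \<in> \<int>[\<zeta>] whenever |W|^2 is an integer; hence b g is gbent whenever g is.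
  Writing a multiplier as c = 2^t b with b odd, the Walsh value of c f at level 2^k equals
  that of b f_t at level 2^(k-t), which gives both directions.
  Instead of Galois theory we use that (X + 1)^(2^r) + 1 is Eisenstein at 2: an integer
  polynomial vanishing at one root of X^(2^r) + 1 then vanishes at all of them.
\<close>

section \<open>Integer polynomials vanishing at a root of X^(2^r) + 1\<close>

lemma map_poly_of_int_add [simp]:
  "map_poly (of_int :: int \<Rightarrow> 'a::comm_ring_1) (p + q) = map_poly of_int p + map_poly of_int q"
  by (rule poly_eqI) (simp add: coeff_map_poly)

lemma map_poly_of_int_diff [simp]:
  "map_poly (of_int :: int \<Rightarrow> 'a::comm_ring_1) (p - q) = map_poly of_int p - map_poly of_int q"
  by (rule poly_eqI) (simp add: coeff_map_poly)

lemma map_poly_of_int_mult [simp]: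
  "map_poly (of_int :: int \<Rightarrow> 'a::comm_ring_1) (p * q) = map_poly of_int p * map_poly of_int q"
  by (rule poly_eqI) (simp add: coeff_map_poly coeff_mult)

lemma map_poly_of_int_smult [simp]:
  "map_poly (of_int :: int \<Rightarrow> 'a::comm_ring_1) (smult c p) = smult (of_int c) (map_poly of_int p)"
  by (simp add: map_poly_smult)

lemma map_poly_of_int_pCons [simp]:
  "map_poly (of_int :: int \<Rightarrow> 'a::comm_ring_1) (pCons c p) = pCons (of_int c) (map_poly of_int p)"
  by (simp add: map_poly_pCons)

lemma map_poly_of_int_power [simp]:
  "map_poly (of_int :: int \<Rightarrow> 'a::comm_ring_1) (p ^ n) = map_poly of_int p ^ n"
  by (induction n) simp_all

lemma map_poly_of_int_sum [simp]:
  "map_poly (of_int :: int \<Rightarrow> 'a::comm_ring_1) (\<Sum>x\<in>A. f x) = (\<Sum>x\<in>A. map_poly of_int (f x))"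
  by (induction A rule: infinite_finite_induct) simp_all

lemma map_poly_of_int_pcompose [simp]:
  "map_poly (of_int :: int \<Rightarrow> 'a::comm_ring_1) (pcompose p q)
     = pcompose (map_poly of_int p) (map_poly of_int q)"
  by (induction p) (simp_all add: pcompose_pCons)

lemma prime_dvd_low_coeffs_of_factor:
  fixes A B :: "int poly" and p :: int
  assumes "prime p" "\<not> p dvd coeff B 0" "\<forall>j<N. p dvd coeff (A * B) j" "j < N"
  shows "p dvd coeff A j"
  using \<open>j < N\<close>
proof (induction j rule: less_induct)
  case (less j)
  have "coeff (A * B) j = (\<Sum>i<j. coeff A i * coeff B (j - i)) + coeff A j * coeff B 0"
    by (simp add: coeff_mult lessThan_Suc_atMost[symmetric])
  moreover have "p dvd (\<Sum>i<j. coeff A i * coeff B (j - i))"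
    using less by (intro dvd_sum) auto
  ultimately have "p dvd coeff A j * coeff B 0"
    using assms(3) less.prems by (metis dvd_add_right_iff)
  then show ?case
    using assms(1,2) by (simp add: prime_dvd_mult_iff)
qed

definition eisenstein :: "int \<Rightarrow> int poly \<Rightarrow> bool" where
  "eisenstein p E \<longleftrightarrow>
     \<not> p dvd lead_coeff E \<and> (\<forall>j<degree E. p dvd coeff E j) \<and> \<not> p^2 dvd coeff E 0"

lemma eisenstein_factor_degree:
  fixes p :: int
  assumes "prime p" "eisenstein p (P * Q)"
  shows "degree P = 0 \<or> degree Q = 0"
proof -
  have one_side: "degree Q = 0" if E: "eisenstein p (P * Q)" and Q0: "\<not> p dvd coeff Q 0" for P Q
  proof -
    have "P * Q \<noteq> 0" using E by (auto simp: eisenstein_def)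
    then have deg: "degree (P * Q) = degree P + degree Q" by (simp add: degree_mult_eq)
    have low: "p dvd coeff P j" if "j < degree (P * Q)" for j
      using prime_dvd_low_coeffs_of_factor[OF \<open>prime p\<close> Q0 _ that] E
      by (simp add: eisenstein_def)
    have "\<not> p dvd lead_coeff P"
      using E by (auto simp: eisenstein_def lead_coeff_mult)
    then show ?thesis using low[of "degree P"] deg by (cases "degree Q = 0") auto
  qed
  have "\<not> p dvd coeff P 0 \<or> \<not> p dvd coeff Q 0"
  proof (rule ccontr)
    assume "\<not> ?thesis"
    then have "p^2 dvd coeff P 0 * coeff Q 0" by (simp add: power2_eq_square mult_dvd_mono)
    then show False using assms(2) by (simp add: eisenstein_def coeff_mult)
  qed
  then show ?thesis
    using one_side[of Q P] one_side[of P Q] assms(2) by (auto simp: mult.commute)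
qed

lemma one_plus_X_power_two_power_mod_2:
  "\<exists>S. ([:1,1:]::int poly) ^ 2^r = monom 1 (2^r) + 1 + smult 2 S"
proof (induction r)
  case 0
  show ?case by (rule exI[of _ 0]) (simp add: monom_Suc monom_0 one_pCons)
next
  case (Suc r)
  then obtain S where S: "([:1,1:]::int poly) ^ 2^r = monom 1 (2^r) + 1 + smult 2 S" by blast
  let ?X = "monom (1::int) (2^r)"
  have two: "smult 2 p = 2 * p" for p :: "int poly" by (simp add: numeral_poly)
  have "([:1,1:]::int poly) ^ 2^Suc r = (?X + 1 + smult 2 S)^2"
    by (simp add: S[symmetric] power_mult[symmetric] mult.commute)
  also have "\<dots> = ?X * ?X + 1 + smult 2 (?X + smult 2 (?X * S) + smult 2 S + smult 2 (S * S))"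
    by (simp only: two) (simp add: power2_eq_square algebra_simps)
  also have "?X * ?X = monom 1 (2^Suc r)" by (simp add: mult_monom mult_2)
  finally show ?case by blast
qed

lemma eisenstein_shifted_two_power_cyclotomic:
  fixes r :: nat
  defines "E \<equiv> ([:1,1:]::int poly) ^ 2^r + 1"
  shows "eisenstein 2 E" "content E = 1"
proof -
  have deg_power: "degree (([:1,1:]::int poly) ^ 2^r) = 2^r"
    by (subst degree_power_eq) auto
  have deg: "degree E = 2^r"
    unfolding E_def using deg_power by (subst degree_add_eq_left) auto
  have lead: "lead_coeff E = 1"
    using lead_coeff_power[of "[:1,1:]::int poly" "2^r"] deg deg_power by (simp add: E_def)
  then have "content E dvd 1"
    using content_dvd_coeff[of E "degree E"] by simp
  then show "content E = 1"
    by (metis is_unit_content_iff)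
  have coeff0: "coeff E 0 = 2"
    unfolding E_def poly_0_coeff_0[symmetric] by simp
  obtain S where S: "([:1,1:]::int poly) ^ 2^r = monom 1 (2^r) + 1 + smult 2 S"
    using one_plus_X_power_two_power_mod_2 by blast
  have "even (coeff E j)" if "j < 2^r" for j
    using that coeff0 by (cases j) (simp_all add: E_def S coeff_monom numeral_poly)
  then show "eisenstein 2 E"
    using lead coeff0 deg by (simp add: eisenstein_def)
qed

lemma minimal_annihilator_divides:
  fixes w :: "'a::{idom, ring_char_0}"
  assumes "P \<noteq> 0" "poly (map_poly of_int P) w = 0"
    and P_min: "\<And>S. S \<noteq> 0 \<Longrightarrow> poly (map_poly of_int S) w = 0 \<Longrightarrow> degree P \<le> degree S"
    and "poly (map_poly of_int S) w = 0"
  shows "\<exists>q. smult (lead_coeff P ^ (Suc (degree S) - degree P)) S = P * q"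
proof -
  obtain q r where qr: "pseudo_divmod S P = (q, r)" by fastforce
  have div: "smult (lead_coeff P ^ (Suc (degree S) - degree P)) S = P * q + r"
    using pseudo_divmod(1)[OF assms(1) qr] by simp
  have "r = 0"
  proof (rule ccontr)
    assume "r \<noteq> 0"
    have "poly (map_poly of_int r) w = 0"
      using arg_cong[OF div, of "\<lambda>T. poly (map_poly of_int T) w"] assms(2,4) by simp
    then have "degree P \<le> degree r" using P_min \<open>r \<noteq> 0\<close> by blast
    then show False using pseudo_divmod(2)[OF assms(1) qr] \<open>r \<noteq> 0\<close> by simp
  qed
  then show ?thesis using div by auto
qed

lemma eisenstein_annihilator_degree:
  fixes w :: "'a::{idom, ring_char_0}" and p :: int
  assumes "prime p" "eisenstein p E" "content E = 1" "poly (map_poly of_int E) w = 0"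
    and "S \<noteq> 0" "poly (map_poly of_int S) w = 0"
  shows "degree E \<le> degree S"
proof -
  have "E \<noteq> 0" using assms(3) by auto
  then obtain P where P: "P \<noteq> 0" "poly (map_poly of_int P) w = 0"
    and P_min: "\<And>S. S \<noteq> 0 \<Longrightarrow> poly (map_poly of_int S) w = 0 \<Longrightarrow> degree P \<le> degree S"
    using ex_has_least_nat[of "\<lambda>S. S \<noteq> 0 \<and> poly (map_poly of_int S) w = 0" E degree] assms(4)
    by blast
  define c where "c = lead_coeff P ^ (Suc (degree E) - degree P)"
  obtain q where "smult c E = P * q"
    using minimal_annihilator_divides[OF P P_min assms(4)] by (auto simp: c_def)
  \<comment> \<open>Gauss's lemma turns the pseudo-division into a factorisation of \<open>E\<close> over \<open>\<int>\<close>.\<close>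
  then have "primitive_part (smult c E) = primitive_part (P * q)" by simp
  then have "smult (sgn c) E = primitive_part P * primitive_part q"
    by (simp add: primitive_part_mult primitive_part_smult primitive_part_prim[OF assms(3)])
  have "c \<noteq> 0"
    using P(1) by (simp add: c_def)
  define Q where "Q = smult (sgn c) (primitive_part q)"
  have "E = smult (sgn c * sgn c) E"
    using \<open>c \<noteq> 0\<close> by simp
  also have "\<dots> = primitive_part P * Q"
    by (simp only: smult_smult[symmetric] \<open>smult (sgn c) E = _\<close> Q_def mult_smult_right)
  finally have EPQ: "E = primitive_part P * Q" .
  have "degree P \<noteq> 0"
  proof
    assume "degree P = 0"
    then obtain a where "P = [:a:]" by (metis degree_eq_zeroE)
    then show False using P by simp
  qed
  then have "degree Q = 0"
    using eisenstein_factor_degree[OF assms(1), of "primitive_part P" Q] assms(2) EPQ by simp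
  then have "degree E = degree P"
    using EPQ \<open>E \<noteq> 0\<close> by (simp add: degree_mult_eq)
  then show ?thesis using P_min assms(5,6) by simp
qed

lemma eisenstein_common_roots:
  fixes w y :: "'a::{idom, ring_char_0}" and p :: int
  assumes "prime p" "eisenstein p E" "content E = 1"
    and "poly (map_poly of_int E) w = 0" "poly (map_poly of_int E) y = 0"
    and "poly (map_poly of_int R) w = 0"
  shows "poly (map_poly of_int R) y = 0"
proof -
  have "E \<noteq> 0" using assms(3) by auto
  obtain q where "smult (lead_coeff E ^ (Suc (degree R) - degree E)) R = E * q"
    using minimal_annihilator_divides[OF \<open>E \<noteq> 0\<close> assms(4)
        eisenstein_annihilator_degree[OF assms(1-4)] assms(6)] by blast
  from arg_cong[OF this, of "\<lambda>T. poly (map_poly of_int T) y"]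
  show ?thesis using assms(5) \<open>E \<noteq> 0\<close> by simp
qed

lemma poly_of_int_roots_of_minus_one:
  fixes w y :: "'a::{idom, ring_char_0}"
  assumes "w ^ 2^r = -1" "y ^ 2^r = -1" "poly (map_poly of_int R) w = 0"
  shows "poly (map_poly of_int R) y = 0"
proof -
  define E where "E = ([:1,1:]::int poly) ^ 2^r + 1"
  have prime_two: "prime (2::int)" by simp
  note E = eisenstein_shifted_two_power_cyclotomic[of r, folded E_def]
  have E_root: "poly (map_poly of_int E) (z - 1) = 0" if "z ^ 2^r = -1" for z :: 'a
    using that by (simp add: E_def)
  have shift: "poly (map_poly of_int (pcompose R [:1,1:])) (z - 1) = poly (map_poly of_int R) z" for z :: 'a
    by (simp add: poly_pcompose)
  have "poly (map_poly of_int (pcompose R [:1,1:])) (y - 1) = 0"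
    by (rule eisenstein_common_roots[OF prime_two E(1,2) E_root[OF assms(1)] E_root[OF assms(2)]])
      (simp only: shift assms(3))
  then show ?thesis by (simp only: shift)
qed

lemma cnj_root_of_unity:
  fixes z :: complex
  assumes "z ^ Suc m = 1"
  shows "cnj z = z ^ m"
proof -
  have "norm z ^ Suc m = 1" by (metis assms norm_one norm_power)
  then have "norm z = 1"
    by (metis norm_ge_zero power_one zero_less_Suc zero_le_one power_eq_imp_eq_base)
  then have "z * cnj z = 1" by (simp add: complex_norm_square[symmetric])
  moreover have "z * z ^ m = 1" using assms by simp
  ultimately show ?thesis by (metis mult.left_commute mult_1_right mult.commute)
qed

lemma norm_poly_of_int_odd_power_root:
  fixes \<zeta> :: complex and P :: "int poly"
  assumes \<zeta>: "\<zeta> ^ 2^r = -1" and "odd b"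
    and "norm (poly (map_poly of_int P) \<zeta>) ^ 2 = of_int A"
  shows "norm (poly (map_poly of_int P) (\<zeta> ^ b)) ^ 2 = of_int A"
proof -
  define M :: nat where "M = 2 ^ Suc r"
  \<comment> \<open>On \<open>M\<close>-th roots of unity \<open>cnj z = z ^ (M - 1)\<close>, so \<open>R\<close> evaluates to \<open>|P z|\<^sup>2 - A\<close> there.\<close>
  define R where "R = P * pcompose P (monom 1 (M - 1)) - [:A:]"
  have R_eval: "poly (map_poly of_int R) z = complex_of_real (norm (poly (map_poly of_int P) z) ^ 2) - of_int A"
    if "z ^ M = 1" for z
  proof -
    have "cnj z = z ^ (M - 1)"
      using that by (intro cnj_root_of_unity) (simp add: M_def)
    moreover have "map_poly cnj (map_poly of_int P) = map_poly of_int P"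
      by (simp add: map_poly_map_poly o_def)
    ultimately have "cnj (poly (map_poly of_int P) z) = poly (map_poly of_int P) (z ^ (M - 1))"
      by (simp add: poly_cnj)
    then show ?thesis
      using complex_norm_square[of "poly (map_poly of_int P) z"]
      by (simp add: R_def poly_pcompose map_poly_monom poly_monom)
  qed
  have "(\<zeta> ^ b) ^ 2^r = (\<zeta> ^ 2^r) ^ b"
    by (simp only: power_mult[symmetric] mult.commute)
  then have \<zeta>b: "(\<zeta> ^ b) ^ 2^r = -1"
    using \<zeta> \<open>odd b\<close> by simp
  have unit: "z ^ M = 1" if "z ^ 2^r = -1" for z :: complex
  proof -
    have "z ^ M = (z ^ 2^r) ^ 2" by (simp add: M_def power_mult[symmetric] mult.commute)
    then show ?thesis using that by simp
  qed
  have "poly (map_poly of_int R) \<zeta> = 0"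
    using R_eval[OF unit[OF \<zeta>]] assms(3) by simp
  then have "poly (map_poly of_int R) (\<zeta> ^ b) = 0"
    using poly_of_int_roots_of_minus_one[OF \<zeta> \<zeta>b] by blast
  then have "complex_of_real (norm (poly (map_poly of_int P) (\<zeta> ^ b)) ^ 2) = of_real (of_int A)"
    using R_eval[OF unit[OF \<zeta>b]] by simp
  then show ?thesis
    using of_real_eq_iff by blast
qed

section \<open>Walsh transforms as polynomials in a root of unity\<close>

lemma zeta_powi: "zeta q powi z = cis (2 * pi * of_int z / real q)"
  by (simp add: zeta_def cis_power_int mult.commute)

lemma zeta_powi_cong:
  assumes "int q dvd a - b"
  shows "zeta q powi a = zeta q powi b"
proof -
  obtain s where "a - b = int q * s" using assms by (elim dvdE)
  then have "a = b + int q * s" by simp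
  then have "2 * pi * of_int a / real q = 2 * pi * of_int b / real q + 2 * pi * of_int s"
    if "q \<noteq> 0" using that by (simp add: field_simps)
  moreover have "cis (x + 2 * pi * of_int s) = cis x" for x
    by (simp add: cis_mult[symmetric])
  ultimately show ?thesis
    using \<open>a = b + int q * s\<close> by (cases "q = 0") (auto simp: zeta_powi)
qed

lemma zeta_mult_powi:
  assumes "d \<noteq> 0"
  shows "zeta (d * q) powi (int d * z) = zeta q powi z"
  using assms by (simp add: zeta_powi mult.assoc)

lemma walsh_cong:
  assumes "\<And>x. int q dvd g x - h x"
  shows "walsh q n g u = walsh q n h u"
  unfolding walsh_def using zeta_powi_cong[OF assms] by simp

lemma walsh_scale:
  assumes "d \<noteq> 0"
  shows "walsh (d * q) n (\<lambda>x. int d * g x) u = walsh q n g u"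
  unfolding walsh_def using zeta_mult_powi[OF assms] by simp

text \<open>Reducing modulo \<open>q\<close> makes the exponents nonnegative, so that \<open>nat\<close> truncates nothing.\<close>

definition walsh_poly :: "nat \<Rightarrow> nat \<Rightarrow> (bool list \<Rightarrow> int) \<Rightarrow> bool list \<Rightarrow> int poly" where
  "walsh_poly q n g u = (\<Sum>x\<in>Vn n. smult ((-1) ^ dotp u x) (monom 1 (nat (g x mod int q))))"

lemma poly_walsh_poly:
  assumes "0 < q"
  shows "poly (map_poly of_int (walsh_poly q n g u)) (zeta q ^ b) = walsh q n (\<lambda>x. int b * g x) u"
  unfolding walsh_def walsh_poly_def map_poly_of_int_sum poly_sum
proof (rule sum.cong[OF refl])
  fix x
  have "int (b * nat (g x mod int q)) = int b * (g x mod int q)"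
    using assms by simp
  then have "(zeta q ^ b) ^ nat (g x mod int q) = zeta q powi (int b * (g x mod int q))"
    by (metis power_int_of_nat power_mult)
  also have "\<dots> = zeta q powi (int b * g x)"
    by (rule zeta_powi_cong) (simp add: mod_eq_dvd_iff[symmetric] mod_mult_right_eq)
  finally show "poly (map_poly of_int (smult ((-1) ^ dotp u x) (monom 1 (nat (g x mod int q))))) (zeta q ^ b)
      = zeta q powi (int b * g x) * (-1) ^ dotp u x"
    by (simp add: map_poly_monom poly_monom)
qed

lemma norm_eq_two_powr_half_iff:
  fixes r :: real
  assumes "0 \<le> r"
  shows "r = 2 powr (real n / 2) \<longleftrightarrow> r ^ 2 = 2 ^ n"
proof -
  have "(2 powr (real n / 2)) ^ 2 = (2::real) ^ n"
    by (simp add: powr_realpow[symmetric] powr_powr[symmetric] power2_eq_square powr_add[symmetric])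
  then show ?thesis using assms by (metis power2_eq_iff_nonneg powr_ge_zero)
qed

lemma zeta_two_power_root_of_minus_one: "zeta (2 ^ Suc r) ^ 2^r = -1"
proof -
  have "zeta (2 ^ Suc r) ^ 2^r = cis (real (2^r) * (2 * pi / real (2 ^ Suc r)))"
    by (simp only: zeta_def Complex.DeMoivre)
  also have "real (2^r) * (2 * pi / real (2 ^ Suc r)) = pi" by simp
  finally show ?thesis by simp
qed

lemma walsh_odd_multiple_bent:
  assumes "odd b" and bent: "norm (walsh (2^m) n g u) = 2 powr (real n / 2)"
  shows "norm (walsh (2^m) n (\<lambda>x. int b * g x) u) = 2 powr (real n / 2)"
proof (cases m)
  case 0
  then show ?thesis using bent walsh_cong[of 1 "\<lambda>x. int b * g x" g] by simp
next
  case (Suc r)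
  define P where "P = walsh_poly (2^m) n g u"
  have walsh_P: "walsh (2^m) n (\<lambda>x. int c * g x) u = poly (map_poly of_int P) (zeta (2^m) ^ c)" for c
    by (simp add: P_def poly_walsh_poly)
  have "norm (poly (map_poly of_int P) (zeta (2^m))) ^ 2 = of_int (2 ^ n)"
    using bent walsh_P[of 1] norm_eq_two_powr_half_iff by simp
  then have "norm (poly (map_poly of_int P) (zeta (2^m) ^ b)) ^ 2 = of_int (2 ^ n)"
    using norm_poly_of_int_odd_power_root[OF _ \<open>odd b\<close>] zeta_two_power_root_of_minus_one Suc
    by blast
  then show ?thesis
    using walsh_P[of b] norm_eq_two_powr_half_iff by simp
qed

lemma two_power_dvd_digit_sum_diff:
  fixes d :: "nat \<Rightarrow> int"
  assumes "m \<le> k"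
  shows "2 ^ m dvd (\<Sum>j<k. 2^j * d j) - (\<Sum>j<m. 2^j * d j)"
proof -
  have "(\<Sum>j<k. 2^j * d j) = (\<Sum>j<m. 2^j * d j) + (\<Sum>j\<in>{m..<k}. 2^j * d j)"
    unfolding lessThan_atLeast0 using assms by (simp add: sum.atLeastLessThan_concat)
  moreover have "2 ^ m dvd (\<Sum>j\<in>{m..<k}. 2^j * d j)"
    by (intro dvd_sum) (auto intro: dvd_mult2 le_imp_power_dvd)
  ultimately show ?thesis by simp
qed

lemma walsh_digit_sum_truncate:
  fixes a :: "nat \<Rightarrow> bool list \<Rightarrow> bool" and c :: int
  assumes "t \<le> k"
  shows "walsh (2^k) n (\<lambda>x. 2^t * c * (\<Sum>j<k. 2^j * of_bool (a j x))) u
       = walsh (2^(k-t)) n (\<lambda>x. c * (\<Sum>j<k-t. 2^j * of_bool (a j x))) u"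
proof -
  have "walsh (2^k) n (\<lambda>x. 2^t * c * (\<Sum>j<k. 2^j * of_bool (a j x))) u
      = walsh (2^t * 2^(k-t)) n (\<lambda>x. int (2^t) * (c * (\<Sum>j<k. 2^j * of_bool (a j x)))) u"
    using assms by (simp add: power_add[symmetric] mult.assoc)
  also have "\<dots> = walsh (2^(k-t)) n (\<lambda>x. c * (\<Sum>j<k. 2^j * of_bool (a j x))) u"
    by (rule walsh_scale) simp
  also have "\<dots> = walsh (2^(k-t)) n (\<lambda>x. c * (\<Sum>j<k-t. 2^j * of_bool (a j x))) u"
  proof (rule walsh_cong)
    fix x
    show "int (2^(k-t)) dvd c * (\<Sum>j<k. 2^j * of_bool (a j x)) - c * (\<Sum>j<k-t. 2^j * of_bool (a j x))"
      unfolding right_diff_distrib[symmetric] of_nat_power of_nat_numeral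
      using two_power_dvd_digit_sum_diff[of "k - t" k "\<lambda>j. of_bool (a j x)"] by simp
  qed
  finally show ?thesis .
qed

lemma int_two_power_times_odd:
  fixes c :: int
  assumes "0 < c"
  obtains t b where "c = 2^t * int b" "odd b"
proof -
  obtain y where y: "c = 2 ^ multiplicity 2 c * y" "\<not> 2 dvd y"
    using multiplicity_decompose'[of c 2] assms by auto
  then have "0 < y" using assms by (metis zero_less_mult_pos zero_less_numeral zero_less_power)
  then show ?thesis using that[of "multiplicity 2 c" "nat y"] y by (simp add: even_nat_iff)
qed

lemma gbent_truncation_if_Zq_bent:
  fixes a :: "nat \<Rightarrow> bool list \<Rightarrow> bool"
  assumes Z: "Zq_bent (2^k) n (\<lambda>x. \<Sum>j<k. 2^j * of_bool (a j x))" and "t < k"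
  shows "gbent (k - t) n (\<lambda>x. \<Sum>j<k - t. 2^j * of_bool (a j x))"
  unfolding gbent_def
proof
  fix u assume "u \<in> Vn n"
  have "0 < (2::int)^t" "(2::int)^t < int (2^k)"
    using \<open>t < k\<close> by (simp_all add: power_strict_increasing)
  then have "norm (walsh (2^k) n (\<lambda>x. 2^t * 1 * (\<Sum>j<k. 2^j * of_bool (a j x))) u) = 2 powr (real n / 2)"
    using Z \<open>u \<in> Vn n\<close> unfolding Zq_bent_def by simp
  then show "norm (walsh (2^(k-t)) n (\<lambda>x. \<Sum>j<k - t. 2^j * of_bool (a j x)) u) = 2 powr (real n / 2)"
    unfolding walsh_digit_sum_truncate[OF less_imp_le[OF \<open>t < k\<close>]] by simp
qed

lemma Zq_bent_if_gbent_truncations: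
  fixes a :: "nat \<Rightarrow> bool list \<Rightarrow> bool"
  assumes G: "\<And>t. t < k \<Longrightarrow> gbent (k - t) n (\<lambda>x. \<Sum>j<k - t. 2^j * of_bool (a j x))"
  shows "Zq_bent (2^k) n (\<lambda>x. \<Sum>j<k. 2^j * of_bool (a j x))"
  unfolding Zq_bent_def
proof (intro ballI allI impI)
  fix u c assume u: "u \<in> Vn n" and c: "0 < c \<and> c < int (2^k)"
  then obtain t b where c_eq: "c = 2^t * int b" and "odd b"
    using int_two_power_times_odd by blast
  then have "(2::int)^t \<le> c" by (cases b) auto
  then have "(2::int)^t < int (2^k)" using c by linarith
  then have "t < k" by simp
  then have "norm (walsh (2^(k-t)) n (\<lambda>x. int b * (\<Sum>j<k - t. 2^j * of_bool (a j x))) u)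
      = 2 powr (real n / 2)"
    using G u walsh_odd_multiple_bent[OF \<open>odd b\<close>] unfolding gbent_def by blast
  then show "norm (walsh (2^k) n (\<lambda>x. c * (\<Sum>j<k. 2^j * of_bool (a j x))) u) = 2 powr (real n / 2)"
    unfolding c_eq walsh_digit_sum_truncate[OF less_imp_le[OF \<open>t < k\<close>]] .
qed

theorem proposition5:
  fixes n k :: nat and a :: "nat \<Rightarrow> bool list \<Rightarrow> bool"
  assumes "even n" and "k \<ge> 1"
  shows "Zq_bent (2^k) n (\<lambda>x. \<Sum>j<k. 2^j * of_bool (a j x))
     \<longleftrightarrow> (\<forall>t<k. gbent (k - t) n (\<lambda>x. \<Sum>j<k - t. 2^j * of_bool (a j x)))"
  using gbent_truncation_if_Zq_bent Zq_bent_if_gbent_truncations by blast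

end
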